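(* There are absolute constants $c_0,c>0$ such that the following holds. Let $\mathcal{F}$ be a finite class of functions $\mathcal{S}\times\mathcal{A}\to[0,V_{\max}]$, $\Pi$ a finite class of policies, and $\pi_{\mathrm{cp}}\in\Pi$. Assume (1) $C_{\pi_{\mathrm{cp}}}:=\|d^{\pi_{\mathrm{cp}}}/d^D\|_\infty<\infty$ and $\mathcal{T}^{\pi_{\mathrm{cp}}}f\in\mathcal{F}$ for all $f\in\mathcal{F}$; (2) $Q^\pi\in\mathcal{F}$ for all $\pi\in\Pi$. Let $\mathcal{D}$ consist of $n$ i.i.d. samples from $D$, let $\delta\in(0,1)$, $\epsilon_0=c_0V_{\max}^2\log(|\mathcal{F}||\Pi|/\delta)/n$, and for $\pi\in\Pi$ define the version space $\mathcal{F}^\pi_{\epsilon_0}=\{f\in\mathcal{F}:\widehat{\mathcal{E}}(f;\pi)\le\epsilon_0\}$ and $J^-_{\mathrm{VS}}(\pi)=\min_{f\in\mathcal{F}^\pi_{\epsilon_0}}J_f(\pi)$ (with $\min\emptyset=+\infty$). Let $\hat\pi\in\arg\max_{\pi\in\Pi}J^-_{\mathrm{VS}}(\pi)$. Then with probability at least $1-\delta$, $$J(\pi_{\mathrm{cp}})-J(\hat\pi)\le c\,\frac{V_{\max}}{1-\gamma}\sqrt{\frac{C_{\pi_{\mathrm{cp}}}\log(|\mathcal{F}||\Pi|/\delta)}{n}}.$$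
   Context: MDP $(\mathcal{S},\mathcal{A},P,R,\gamma,d_0)$ with finite $\mathcal{S},\mathcal{A}$, deterministic reward $R:\mathcal{S}\times\mathcal{A}\to[0,R_{\max}]$, $\gamma\in[0,1)$, $V_{\max}=R_{\max}/(1-\gamma)$. For a policy $\pi$: $J(\pi)=\mathbb{E}_\pi[\sum_t\gamma^tr_t]$; $Q^\pi(s,a)=\mathbb{E}_\pi[\sum_t\gamma^tr_t\mid s_0=s,a_0=a]$; $f(s,\pi)=\sum_a\pi(a\mid s)f(s,a)$; $J_f(\pi)=\mathbb{E}_{s\sim d_0}[f(s,\pi)]$; $(\mathcal{T}^\pi f)(s,a)=R(s,a)+\gamma\mathbb{E}_{s'\sim P(\cdot\mid s,a)}[f(s',\pi)]$; $d^\pi(s,a)=(1-\gamma)\sum_{t\ge0}\gamma^t\Pr_\pi[s_t=s,a_t=a]$. Data distribution $d^D\in\Delta(\mathcal{S}\times\mathcal{A})$; $D$ is the distribution of $(s,a,r,s')$ with $(s,a)\sim d^D$, $r=R(s,a)$, $s'\sim P(\cdot\mid s,a)$. $\|d^\pi/d^D\|_\infty=\max_{s,a}d^\pi(s,a)/d^D(s,a)$ ($0/0=0$, nonzero$/0=\infty$). Empirical losses on dataset $\mathcal{D}$: $\widehat{\mathcal{L}}(f';f,\pi)=\frac{1}{|\mathcal{D}|}\sum_{(s,a,r,s')\in\mathcal{D}}(f'(s,a)-r-\gamma f(s',\pi))^2$ and $\widehat{\mathcal{E}}(f;\pi)=\max_{g\in\mathcal{F}}\big[\widehat{\mathcal{L}}(f;f,\pi)-\widehat{\mathcal{L}}(g;f,\pi)\big]$.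 Ties are broken arbitrarily. *)

theory Defs
  imports "HOL-Probability.Probability"
begin

text \<open>Finite MDP encoded on carriers S, A :: nat set (states/actions are naturals).\<close>

type_synonym policy = "nat \<Rightarrow> nat pmf"
type_synonym sample = "nat \<times> nat \<times> real \<times> nat"

definition step_sa :: "(nat \<Rightarrow> nat \<Rightarrow> nat pmf) \<Rightarrow> policy \<Rightarrow> nat \<times> nat \<Rightarrow> (nat \<times> nat) pmf" where
  "step_sa P pol = (\<lambda>(s, a). bind_pmf (P s a) (\<lambda>s'. map_pmf (\<lambda>a'. (s', a')) (pol s')))"

fun sa_dist :: "(nat \<Rightarrow> nat \<Rightarrow> nat pmf) \<Rightarrow> policy \<Rightarrow> (nat \<times> nat) pmf \<Rightarrow> nat \<Rightarrow> (nat \<times> nat) pmf" where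
  "sa_dist P pol mu 0 = mu"
| "sa_dist P pol mu (Suc t) = bind_pmf (sa_dist P pol mu t) (step_sa P pol)"

definition init_sa :: "nat pmf \<Rightarrow> policy \<Rightarrow> (nat \<times> nat) pmf" where
  "init_sa d0 pol = bind_pmf d0 (\<lambda>s. map_pmf (\<lambda>a. (s, a)) (pol s))"

definition Jret :: "(nat \<Rightarrow> nat \<Rightarrow> nat pmf) \<Rightarrow> (nat \<Rightarrow> nat \<Rightarrow> real) \<Rightarrow> real \<Rightarrow> nat pmf \<Rightarrow> policy \<Rightarrow> real" where
  "Jret P R \<gamma> d0 pol =
     (\<Sum>t. \<gamma> ^ t * measure_pmf.expectation (sa_dist P pol (init_sa d0 pol) t) (\<lambda>(s, a). R s a))"

definition Qfun :: "(nat \<Rightarrow> nat \<Rightarrow> nat pmf) \<Rightarrow> (nat \<Rightarrow> nat \<Rightarrow> real) \<Rightarrow> real \<Rightarrow> policy \<Rightarrow> nat \<Rightarrow> nat \<Rightarrow> real" where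
  "Qfun P R \<gamma> pol s a =
     (\<Sum>t. \<gamma> ^ t * measure_pmf.expectation (sa_dist P pol (return_pmf (s, a)) t) (\<lambda>(s', a'). R s' a'))"

definition occ :: "(nat \<Rightarrow> nat \<Rightarrow> nat pmf) \<Rightarrow> real \<Rightarrow> nat pmf \<Rightarrow> policy \<Rightarrow> nat \<times> nat \<Rightarrow> real" where
  "occ P \<gamma> d0 pol sa = (1 - \<gamma>) * (\<Sum>t. \<gamma> ^ t * pmf (sa_dist P pol (init_sa d0 pol) t) sa)"

definition conc :: "nat set \<Rightarrow> nat set \<Rightarrow> (nat \<Rightarrow> nat \<Rightarrow> nat pmf) \<Rightarrow> real \<Rightarrow> nat pmf \<Rightarrow> (nat \<times> nat) pmf \<Rightarrow> policy \<Rightarrow> ereal" where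
  "conc S A P \<gamma> d0 dD pol =
     Max ((\<lambda>sa. if pmf dD sa = 0 then (if occ P \<gamma> d0 pol sa = 0 then 0 else \<infinity>)
                 else ereal (occ P \<gamma> d0 pol sa / pmf dD sa)) ` (S \<times> A))"

definition fpol :: "nat set \<Rightarrow> (nat \<Rightarrow> nat \<Rightarrow> real) \<Rightarrow> policy \<Rightarrow> nat \<Rightarrow> real" where
  "fpol A f pol s = (\<Sum>a\<in>A. pmf (pol s) a * f s a)"

definition Jf :: "nat set \<Rightarrow> nat pmf \<Rightarrow> (nat \<Rightarrow> nat \<Rightarrow> real) \<Rightarrow> policy \<Rightarrow> real" where
  "Jf A d0 f pol = measure_pmf.expectation d0 (\<lambda>s. fpol A f pol s)"

definition bellman :: "nat set \<Rightarrow> (nat \<Rightarrow> nat \<Rightarrow> nat pmf) \<Rightarrow> (nat \<Rightarrow> nat \<Rightarrow> real) \<Rightarrow> real \<Rightarrow> policy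
    \<Rightarrow> (nat \<Rightarrow> nat \<Rightarrow> real) \<Rightarrow> nat \<Rightarrow> nat \<Rightarrow> real" where
  "bellman A P R \<gamma> pol f s a = R s a + \<gamma> * measure_pmf.expectation (P s a) (\<lambda>s'. fpol A f pol s')"

definition Dsample :: "(nat \<Rightarrow> nat \<Rightarrow> nat pmf) \<Rightarrow> (nat \<Rightarrow> nat \<Rightarrow> real) \<Rightarrow> (nat \<times> nat) pmf \<Rightarrow> sample pmf" where
  "Dsample P R dD = bind_pmf dD (\<lambda>(s, a). map_pmf (\<lambda>s'. (s, a, R s a, s')) (P s a))"

definition dataset_pmf :: "nat \<Rightarrow> sample pmf \<Rightarrow> (nat \<Rightarrow> sample) pmf" where
  "dataset_pmf n D = Pi_pmf {..<n} undefined (\<lambda>_. D)"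

definition Lhat :: "nat set \<Rightarrow> real \<Rightarrow> nat \<Rightarrow> (nat \<Rightarrow> sample) \<Rightarrow> (nat \<Rightarrow> nat \<Rightarrow> real)
    \<Rightarrow> (nat \<Rightarrow> nat \<Rightarrow> real) \<Rightarrow> policy \<Rightarrow> real" where
  "Lhat A \<gamma> n Ds f' f pol =
     (1 / real n) * (\<Sum>i<n. (case Ds i of (s, a, r, s') \<Rightarrow> (f' s a - r - \<gamma> * fpol A f pol s')\<^sup>2))"

definition Ehat :: "nat set \<Rightarrow> real \<Rightarrow> nat \<Rightarrow> (nat \<Rightarrow> sample) \<Rightarrow> (nat \<Rightarrow> nat \<Rightarrow> real) set
    \<Rightarrow> (nat \<Rightarrow> nat \<Rightarrow> real) \<Rightarrow> policy \<Rightarrow> real" where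
  "Ehat A \<gamma> n Ds F f pol = Max ((\<lambda>g. Lhat A \<gamma> n Ds f f pol - Lhat A \<gamma> n Ds g f pol) ` F)"

definition vspace :: "nat set \<Rightarrow> real \<Rightarrow> nat \<Rightarrow> (nat \<Rightarrow> sample) \<Rightarrow> (nat \<Rightarrow> nat \<Rightarrow> real) set
    \<Rightarrow> real \<Rightarrow> policy \<Rightarrow> (nat \<Rightarrow> nat \<Rightarrow> real) set" where
  "vspace A \<gamma> n Ds F eps pol = {f \<in> F. Ehat A \<gamma> n Ds F f pol \<le> eps}"

definition JVS :: "nat set \<Rightarrow> real \<Rightarrow> nat pmf \<Rightarrow> nat \<Rightarrow> (nat \<Rightarrow> sample) \<Rightarrow> (nat \<Rightarrow> nat \<Rightarrow> real) set
    \<Rightarrow> real \<Rightarrow> policy \<Rightarrow> ereal" where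
  "JVS A \<gamma> d0 n Ds F eps pol =
     (let V = vspace A \<gamma> n Ds F eps pol in
      if V = {} then \<infinity> else ereal (Min ((\<lambda>f. Jf A d0 f pol) ` V)))"

end

theory Submission
  imports Defs
begin

(*
  The argument is deterministic once two events hold. The performance-difference identity
  writes J(pi) - J_f(pi) as the d^pi-average of the Bellman residual T^pi f - f divided by
  1 - gamma; by concentrability and Cauchy-Schwarz this is at most sqrt (C beta) / (1 - gamma)
  when the residual has squared L2(d^D) norm at most beta. So if (i) every Q^pi lies in its own
  version space and (ii) every f in the version space of pi_cp has residual at most beta, then
    J(pi_cp) - sqrt (C beta) / (1 - gamma) <= J_VS(pi_cp) <= J_VS(pi_hat) <= J_{Q^pi_hat}(pi_hat) = J(pi_hat).
  Both events follow from a lower tail bound for the excess squared loss against a Bellman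
  backup: its mean is the squared L2(d^D) distance to the backup and its second moment is at
  most 4 Vmax^2 times that mean, so Chernoff's method and a union bound over Pi x F and F give
  beta of order Vmax^2 log (|F| |Pi| / delta) / n.
*)

lemma exp_le_one_plus_x_plus_sq:
  fixes x :: real
  assumes "x \<le> 1"
  shows "exp x \<le> 1 + x + x\<^sup>2"
proof (cases "0 \<le> x")
  case True
  then show ?thesis using exp_bound assms by simp
next
  case False
  define q where "q = 1 - x + x\<^sup>2 / 2"
  have q_pos: "0 < q" using False unfolding q_def by (simp add: add_pos_nonneg)
  have "q \<le> exp (-x)" using exp_lower_Taylor_quadratic[of "-x"] False unfolding q_def by simp
  then have "exp x \<le> 1 / q" using q_pos by (simp add: exp_minus field_simps)
  also have "\<dots> \<le> 1 + x + x\<^sup>2"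
  proof -
    have eq: "q * (1 + x + x\<^sup>2) = 1 + x\<^sup>2 / 2 + (-x) * x\<^sup>2 / 2 + x\<^sup>2 * x\<^sup>2 / 2"
      unfolding q_def by (simp add: field_simps power2_eq_square)
    have "0 \<le> (-x) * x\<^sup>2" using False by (simp add: mult_nonpos_nonneg)
    moreover have "0 \<le> x\<^sup>2 * x\<^sup>2" "0 \<le> x\<^sup>2" by simp_all
    ultimately have "1 \<le> q * (1 + x + x\<^sup>2)" unfolding eq by linarith
    then show ?thesis using q_pos by (simp add: divide_le_eq mult.commute)
  qed
  finally show ?thesis .
qed

lemma expectation_finite_support:
  fixes g :: "'a \<Rightarrow> real"
  assumes "finite X" "set_pmf p \<subseteq> X"
  shows "measure_pmf.expectation p g = (\<Sum>x\<in>X. pmf p x * g x)"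
  using assms by (subst integral_measure_pmf[of X]) auto

lemma abs_expectation_le:
  fixes g :: "'a \<Rightarrow> real"
  assumes "finite X" "set_pmf p \<subseteq> X" "\<And>x. x \<in> X \<Longrightarrow> \<bar>g x\<bar> \<le> M"
  shows "\<bar>measure_pmf.expectation p g\<bar> \<le> M"
proof -
  have "\<bar>measure_pmf.expectation p g\<bar> \<le> (\<Sum>x\<in>X. \<bar>pmf p x * g x\<bar>)"
    unfolding expectation_finite_support[OF assms(1,2)] by (rule sum_abs)
  also have "\<dots> \<le> (\<Sum>x\<in>X. pmf p x * M)"
    by (intro sum_mono) (simp add: abs_mult assms(3) mult_left_mono)
  also have "\<dots> = M" using sum_pmf_eq_1[OF assms(1,2)] by (simp flip: sum_distrib_right)
  finally show ?thesis .
qed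

lemma expectation_bind_finite_support:
  fixes g :: "'b \<Rightarrow> real"
  assumes "finite X" "set_pmf p \<subseteq> X" "finite Y" "\<And>x. x \<in> X \<Longrightarrow> set_pmf (N x) \<subseteq> Y"
  shows "measure_pmf.expectation (bind_pmf p N) g = (\<Sum>x\<in>X. pmf p x * measure_pmf.expectation (N x) g)"
  using assms by (subst pmf_expectation_bind[of X]) (auto intro: finite_subset)

lemma expectation_cong_support:
  fixes u v :: "'a \<Rightarrow> real"
  assumes "\<And>x. x \<in> set_pmf p \<Longrightarrow> u x = v x"
  shows "measure_pmf.expectation p u = measure_pmf.expectation p v"
  using assms by (intro integral_cong_AE) (auto simp: AE_measure_pmf_iff)

lemma expectation_mono_support:
  fixes u v :: "'a \<Rightarrow> real"
  assumes "finite (set_pmf p)" "\<And>x. x \<in> set_pmf p \<Longrightarrow> u x \<le> v x"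
  shows "measure_pmf.expectation p u \<le> measure_pmf.expectation p v"
  using assms by (intro integral_mono_AE integrable_measure_pmf_finite) (auto simp: AE_measure_pmf_iff)

lemma summable_discounted:
  fixes a :: "nat \<Rightarrow> real"
  assumes "0 \<le> \<gamma>" "\<gamma> < 1" "\<And>t. \<bar>a t\<bar> \<le> M"
  shows "summable (\<lambda>t. \<gamma> ^ t * a t)"
proof (rule summable_comparison_test')
  show "summable (\<lambda>t. M * \<gamma> ^ t)" using assms by (intro summable_mult summable_geometric) auto
  show "norm (\<gamma> ^ t * a t) \<le> M * \<gamma> ^ t" for t
    using mult_right_mono[OF assms(3)[of t], of "\<gamma> ^ t"] assms by (simp add: abs_mult mult.commute)
qed

lemma sum_le_sqrt_by_change_of_measure:
  fixes w u d :: "'a \<Rightarrow> real"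
  assumes w_nonneg: "\<And>x. x \<in> X \<Longrightarrow> 0 \<le> w x" and w_sum: "(\<Sum>x\<in>X. w x) = 1"
    and w_le: "\<And>x. x \<in> X \<Longrightarrow> w x \<le> C * u x" and C_nonneg: "0 \<le> C"
    and u_le: "(\<Sum>x\<in>X. u x * (d x)\<^sup>2) \<le> \<beta>"
  shows "(\<Sum>x\<in>X. w x * d x) \<le> sqrt (C * \<beta>)"
proof (rule real_le_rsqrt)
  have "(\<Sum>x\<in>X. w x * d x)\<^sup>2 = (\<Sum>x\<in>X. sqrt (w x) * (sqrt (w x) * d x))\<^sup>2"
    using w_nonneg by (simp add: mult.assoc[symmetric])
  also have "\<dots> \<le> (\<Sum>x\<in>X. (sqrt (w x))\<^sup>2) * (\<Sum>x\<in>X. (sqrt (w x) * d x)\<^sup>2)"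
    by (rule Cauchy_Schwarz_ineq_sum)
  also have "\<dots> = (\<Sum>x\<in>X. w x * (d x)\<^sup>2)"
    using w_nonneg w_sum by (simp add: power_mult_distrib)
  also have "\<dots> \<le> (\<Sum>x\<in>X. C * (u x * (d x)\<^sup>2))"
    using w_le by (intro sum_mono) (simp add: mult.assoc[symmetric] mult_right_mono)
  also have "\<dots> \<le> C * \<beta>" using u_le C_nonneg by (simp add: mult_left_mono flip: sum_distrib_left)
  finally show "(\<Sum>x\<in>X. w x * d x)\<^sup>2 \<le> C * \<beta>" .
qed

lemma expectation_exp_neg_le:
  fixes p :: "'a pmf" and \<phi> :: "'a \<Rightarrow> real"
  assumes fin: "finite (set_pmf p)"
    and bnd: "\<And>x. x \<in> set_pmf p \<Longrightarrow> \<bar>\<phi> x\<bar> \<le> B"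
    and mean: "measure_pmf.expectation p \<phi> = \<mu>" "0 \<le> \<mu>"
    and second_moment: "measure_pmf.expectation p (\<lambda>x. (\<phi> x)\<^sup>2) \<le> K * \<mu>"
    and \<eta>: "0 < \<eta>" "\<eta> * B \<le> 1" "\<eta> * K \<le> 1 / 2"
  shows "measure_pmf.expectation p (\<lambda>x. exp (- \<eta> * \<phi> x)) \<le> exp (- \<eta> * \<mu> / 2)"
proof -
  let ?E = "\<lambda>g. (\<Sum>x\<in>set_pmf p. pmf p x * g x)"
  have E: "measure_pmf.expectation p g = ?E g" for g :: "'a \<Rightarrow> real"
    using fin by (rule expectation_finite_support) simp
  have "?E (\<lambda>x. exp (- \<eta> * \<phi> x)) \<le> ?E (\<lambda>x. 1 + (- \<eta> * \<phi> x) + (- \<eta> * \<phi> x)\<^sup>2)"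
  proof (intro sum_mono mult_left_mono exp_le_one_plus_x_plus_sq)
    fix x assume x: "x \<in> set_pmf p"
    have "- \<eta> * \<phi> x \<le> \<eta> * \<bar>\<phi> x\<bar>"
      using mult_left_mono[OF abs_ge_minus_self[of "\<phi> x"], of \<eta>] \<eta>(1) by simp
    also have "\<dots> \<le> \<eta> * B" using bnd[OF x] \<eta>(1) by (simp add: mult_left_mono)
    finally show "- \<eta> * \<phi> x \<le> 1" using \<eta>(2) by simp
  qed simp
  also have "\<dots> = ?E (\<lambda>_. 1) - \<eta> * ?E \<phi> + \<eta>\<^sup>2 * ?E (\<lambda>x. (\<phi> x)\<^sup>2)"
    by (simp add: algebra_simps sum.distrib sum_subtractf sum_distrib_left power2_eq_square)
  also have "\<dots> \<le> 1 - \<eta> * \<mu> + \<eta> * ((\<eta> * K) * \<mu>)"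
    using sum_pmf_eq_1[OF fin] mean(1) second_moment \<eta>(1)
    by (simp add: E power2_eq_square mult.assoc mult_left_mono)
  also have "\<dots> \<le> 1 + (- \<eta> * \<mu> / 2)"
    using mult_left_mono[OF mult_right_mono[OF \<eta>(3) mean(2)], of \<eta>] \<eta>(1) by linarith
  also have "\<dots> \<le> exp (- \<eta> * \<mu> / 2)" by (rule exp_ge_add_one_self)
  finally show ?thesis by (simp add: E)
qed

(* Chernoff's method. Since the second moment is at most K times the mean, the moment generating
   function of - phi is at most exp (- eta mu / 2), so the deviation term ln (1 / delta) / eta
   involves no sqrt (n mu); this is the source of the fast rate. *)
lemma prob_sum_lt_half_mean_le:
  fixes p :: "'a pmf" and \<phi> :: "'a \<Rightarrow> real"
  assumes fin: "finite (set_pmf p)"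
    and bnd: "\<And>x. x \<in> set_pmf p \<Longrightarrow> \<bar>\<phi> x\<bar> \<le> B"
    and mean: "measure_pmf.expectation p \<phi> = \<mu>" "0 \<le> \<mu>"
    and second_moment: "measure_pmf.expectation p (\<lambda>x. (\<phi> x)\<^sup>2) \<le> K * \<mu>"
    and \<eta>: "0 < \<eta>" "\<eta> * B \<le> 1" "\<eta> * K \<le> 1 / 2" and "0 < \<delta>"
  shows "measure_pmf.prob (Pi_pmf {..<n} dflt (\<lambda>_. p))
           {X. (\<Sum>i<n. \<phi> (X i)) < real n * \<mu> / 2 - ln (1 / \<delta>) / \<eta>} \<le> \<delta>"
proof -
  define Q where "Q = Pi_pmf {..<n} dflt (\<lambda>_. p)"
  define a where "a = real n * \<mu> / 2 - ln (1 / \<delta>) / \<eta>"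
  define Y where "Y = (\<lambda>X. \<Prod>i\<in>{..<n}. exp (- \<eta> * \<phi> (X i)))"
  have Y_eq: "Y X = exp (- \<eta> * (\<Sum>i<n. \<phi> (X i)))" for X
    unfolding Y_def by (simp add: exp_sum sum_distrib_left)
  have mgf: "measure_pmf.expectation Q Y \<le> exp (- \<eta> * \<mu> / 2) ^ n"
  proof -
    have "measure_pmf.expectation Q Y = measure_pmf.expectation p (\<lambda>x. exp (- \<eta> * \<phi> x)) ^ n"
      unfolding Q_def Y_def using fin
      by (subst expectation_prod_Pi_pmf) (auto intro: integrable_measure_pmf_finite simp del: exp_minus)
    also have "\<dots> \<le> exp (- \<eta> * \<mu> / 2) ^ n"
      by (intro power_mono expectation_exp_neg_le[OF assms(1-8)] integral_nonneg_AE) auto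
    finally show ?thesis .
  qed
  have "measure_pmf.prob Q {X. (\<Sum>i<n. \<phi> (X i)) < a}
      \<le> measure_pmf.prob Q {X \<in> space (measure_pmf Q). exp (- \<eta> * a) \<le> Y X}"
    unfolding Y_eq using \<eta>(1) by (intro measure_pmf.finite_measure_mono) auto
  also have "\<dots> \<le> measure_pmf.expectation Q Y / exp (- \<eta> * a)"
    unfolding Q_def Y_def using fin
    by (intro integral_Markov_inequality_measure integrable_prod_Pi_pmf)
       (auto intro!: AE_I2 prod_nonneg intro: integrable_measure_pmf_finite)
  also have "\<dots> \<le> exp (- \<eta> * \<mu> / 2) ^ n / exp (- \<eta> * a)"
    using mgf by (simp add: divide_right_mono)
  also have "\<dots> = exp (- ln (1 / \<delta>))"
    unfolding a_def using \<eta>(1)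
    by (simp add: exp_of_nat_mult[symmetric] exp_diff[symmetric] field_simps)
  also have "\<dots> = \<delta>" using \<open>0 < \<delta>\<close> by (simp add: ln_div)
  finally show ?thesis unfolding Q_def a_def .
qed

lemma ln_double_le:
  fixes x :: real
  assumes "2 \<le> x"
  shows "ln (2 * x) \<le> 2 * ln x"
  using assms by (simp add: ln_mult)

definition sq_dist :: "('a \<times> 'b) pmf \<Rightarrow> ('a \<Rightarrow> 'b \<Rightarrow> real) \<Rightarrow> ('a \<Rightarrow> 'b \<Rightarrow> real) \<Rightarrow> real" where
  "sq_dist \<mu> g h = measure_pmf.expectation \<mu> (\<lambda>(s, a). (g s a - h s a)\<^sup>2)"

lemma sq_dist_nonneg: "0 \<le> sq_dist \<mu> g h"
  unfolding sq_dist_def by (intro integral_nonneg_AE) auto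

lemma sq_dist_self: "sq_dist \<mu> g g = 0"
  unfolding sq_dist_def by (simp add: case_prod_unfold)

lemma sq_dist_commute: "sq_dist \<mu> g h = sq_dist \<mu> h g"
  unfolding sq_dist_def by (simp add: power2_commute)

lemma Ehat_le:
  assumes "finite F" "F \<noteq> {}" "\<And>g. g \<in> F \<Longrightarrow> Lhat A \<gamma> n Ds f f pol - Lhat A \<gamma> n Ds g f pol \<le> e"
  shows "Ehat A \<gamma> n Ds F f pol \<le> e"
  unfolding Ehat_def using assms by (subst Max_le_iff) auto

lemma Lhat_diff_le_Ehat:
  assumes "finite F" "g \<in> F"
  shows "Lhat A \<gamma> n Ds f f pol - Lhat A \<gamma> n Ds g f pol \<le> Ehat A \<gamma> n Ds F f pol"
  unfolding Ehat_def using assms by (intro Max_ge) auto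

lemma fpol_cong:
  assumes "\<forall>a\<in>A. f s a = g s a"
  shows "fpol A f pol s = fpol A g pol s"
  unfolding fpol_def using assms by simp

lemma sa_dist_Suc_shift: "sa_dist P pol \<mu> (Suc t) = sa_dist P pol (bind_pmf \<mu> (step_sa P pol)) t"
  by (induction t) auto

lemma sa_dist_bind_return: "sa_dist P pol \<mu> t = bind_pmf \<mu> (\<lambda>x. sa_dist P pol (return_pmf x) t)"
  by (induction t) (auto simp: bind_return_pmf' bind_assoc_pmf)

locale mdp =
  fixes S A :: "nat set" and P :: "nat \<Rightarrow> nat \<Rightarrow> nat pmf" and R :: "nat \<Rightarrow> nat \<Rightarrow> real" and \<gamma> :: real
  assumes finite_S: "finite S" and finite_A: "finite A"
    and set_pmf_P: "\<And>s a. s \<in> S \<Longrightarrow> a \<in> A \<Longrightarrow> set_pmf (P s a) \<subseteq> S"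
    and discount_nonneg: "0 \<le> \<gamma>" and discount_less_1: "\<gamma> < 1"
begin

definition is_policy :: "policy \<Rightarrow> bool" where
  "is_policy pol \<longleftrightarrow> (\<forall>s\<in>S. set_pmf (pol s) \<subseteq> A)"

lemma finite_SA: "finite (S \<times> A)"
  using finite_S finite_A by simp

lemma set_pmf_step_sa:
  assumes "is_policy pol" "x \<in> S \<times> A"
  shows "set_pmf (step_sa P pol x) \<subseteq> S \<times> A"
  using assms set_pmf_P unfolding is_policy_def step_sa_def by (cases x) (fastforce simp: set_bind_pmf)

lemma set_pmf_sa_dist:
  assumes "is_policy pol" "set_pmf \<mu> \<subseteq> S \<times> A"
  shows "set_pmf (sa_dist P pol \<mu> t) \<subseteq> S \<times> A"
proof (induction t)
  case (Suc t)
  show ?case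
  proof
    fix y assume "y \<in> set_pmf (sa_dist P pol \<mu> (Suc t))"
    then obtain x where "x \<in> set_pmf (sa_dist P pol \<mu> t)" "y \<in> set_pmf (step_sa P pol x)"
      by (auto simp: set_bind_pmf)
    then show "y \<in> S \<times> A" using Suc set_pmf_step_sa[OF assms(1)] by blast
  qed
qed (use assms in simp)

lemma set_pmf_init_sa:
  assumes "is_policy pol" "set_pmf d0 \<subseteq> S"
  shows "set_pmf (init_sa d0 pol) \<subseteq> S \<times> A"
  using assms unfolding is_policy_def init_sa_def by (fastforce simp: set_bind_pmf)

lemma expectation_fpol:
  assumes "is_policy pol" "set_pmf p \<subseteq> S"
  shows "measure_pmf.expectation (bind_pmf p (\<lambda>s. map_pmf (\<lambda>a. (s, a)) (pol s))) (\<lambda>(s, a). f s a)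
       = measure_pmf.expectation p (fpol A f pol)"
proof -
  have "measure_pmf.expectation (bind_pmf p (\<lambda>s. map_pmf (\<lambda>a. (s, a)) (pol s))) (\<lambda>(s, a). f s a)
      = (\<Sum>s\<in>S. pmf p s * measure_pmf.expectation (map_pmf (\<lambda>a. (s, a)) (pol s)) (\<lambda>(s, a). f s a))"
    using assms finite_S finite_SA unfolding is_policy_def
    by (intro expectation_bind_finite_support) auto
  also have "\<dots> = (\<Sum>s\<in>S. pmf p s * fpol A f pol s)"
    using assms(1) finite_A unfolding is_policy_def fpol_def
    by (intro sum.cong refl) (simp add: expectation_finite_support[of A])
  also have "\<dots> = measure_pmf.expectation p (fpol A f pol)"
    using assms finite_S by (simp add: expectation_finite_support[of S])
  finally show ?thesis .
qed

lemma expectation_step_sa: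
  assumes "is_policy pol" "s \<in> S" "a \<in> A"
  shows "measure_pmf.expectation (step_sa P pol (s, a)) (\<lambda>(s, a). f s a)
       = measure_pmf.expectation (P s a) (fpol A f pol)"
  unfolding step_sa_def using expectation_fpol[OF assms(1) set_pmf_P[OF assms(2,3)]] by simp

lemma expectation_bind_step_sa:
  assumes "is_policy pol" "set_pmf \<mu> \<subseteq> S \<times> A"
  shows "measure_pmf.expectation (bind_pmf \<mu> (step_sa P pol)) (\<lambda>(s, a). f s a)
       = measure_pmf.expectation \<mu> (\<lambda>(s, a). measure_pmf.expectation (P s a) (fpol A f pol))"
proof -
  have "measure_pmf.expectation (bind_pmf \<mu> (step_sa P pol)) (\<lambda>(s, a). f s a)
      = (\<Sum>x\<in>S \<times> A. pmf \<mu> x * measure_pmf.expectation (step_sa P pol x) (\<lambda>(s, a). f s a))"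
    by (intro expectation_bind_finite_support[OF finite_SA assms(2) finite_SA] set_pmf_step_sa[OF assms(1)])
  also have "\<dots> = (\<Sum>x\<in>S \<times> A. pmf \<mu> x * (\<lambda>(s, a). measure_pmf.expectation (P s a) (fpol A f pol)) x)"
    using expectation_step_sa[OF assms(1)] by (intro sum.cong refl) auto
  finally show ?thesis using assms finite_SA by (simp add: expectation_finite_support[of "S \<times> A"])
qed

lemma expectation_init_sa:
  assumes "is_policy pol" "set_pmf d0 \<subseteq> S"
  shows "measure_pmf.expectation (init_sa d0 pol) (\<lambda>(s, a). f s a) = Jf A d0 f pol"
  unfolding init_sa_def Jf_def using expectation_fpol[OF assms] by simp

definition disc_value :: "policy \<Rightarrow> (nat \<times> nat) pmf \<Rightarrow> (nat \<times> nat \<Rightarrow> real) \<Rightarrow> real" where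
  "disc_value pol \<mu> g = (\<Sum>t. \<gamma> ^ t * measure_pmf.expectation (sa_dist P pol \<mu> t) g)"

lemma Jret_eq_disc_value: "Jret P R \<gamma> d0 pol = disc_value pol (init_sa d0 pol) (\<lambda>(s, a). R s a)"
  unfolding Jret_def disc_value_def ..

lemma Qfun_eq_disc_value: "Qfun P R \<gamma> pol s a = disc_value pol (return_pmf (s, a)) (\<lambda>(s, a). R s a)"
  unfolding Qfun_def disc_value_def ..

lemma summable_disc_value:
  assumes "is_policy pol" "set_pmf \<mu> \<subseteq> S \<times> A"
  shows "summable (\<lambda>t. \<gamma> ^ t * measure_pmf.expectation (sa_dist P pol \<mu> t) g)"
  using discount_nonneg discount_less_1
proof (rule summable_discounted)
  show "\<bar>measure_pmf.expectation (sa_dist P pol \<mu> t) g\<bar> \<le> (\<Sum>x\<in>S \<times> A. \<bar>g x\<bar>)" for t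
    using finite_SA set_pmf_sa_dist[OF assms]
    by (intro abs_expectation_le[OF finite_SA]) (auto intro: member_le_sum)
qed

lemma disc_value_unfold:
  assumes "is_policy pol" "set_pmf \<mu> \<subseteq> S \<times> A"
  shows "disc_value pol \<mu> g
       = measure_pmf.expectation \<mu> g + \<gamma> * disc_value pol (bind_pmf \<mu> (step_sa P pol)) g"
proof -
  have step: "set_pmf (bind_pmf \<mu> (step_sa P pol)) \<subseteq> S \<times> A"
    using set_pmf_sa_dist[OF assms, of 1] by simp
  have "disc_value pol \<mu> g
      = (\<Sum>t. \<gamma> ^ Suc t * measure_pmf.expectation (sa_dist P pol \<mu> (Suc t)) g)
        + measure_pmf.expectation \<mu> g"
    unfolding disc_value_def using suminf_split_head[OF summable_disc_value[OF assms]] by simp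
  also have "(\<Sum>t. \<gamma> ^ Suc t * measure_pmf.expectation (sa_dist P pol \<mu> (Suc t)) g)
      = \<gamma> * disc_value pol (bind_pmf \<mu> (step_sa P pol)) g"
    unfolding disc_value_def sa_dist_Suc_shift
    using suminf_mult[OF summable_disc_value[OF assms(1) step], of \<gamma>] by (simp add: mult.assoc)
  finally show ?thesis by simp
qed

lemma disc_value_step_sa:
  assumes "is_policy pol" "set_pmf \<mu> \<subseteq> S \<times> A"
  shows "disc_value pol (bind_pmf \<mu> (step_sa P pol)) (\<lambda>(s, a). f s a)
       = disc_value pol \<mu> (\<lambda>(s, a). measure_pmf.expectation (P s a) (fpol A f pol))"
  unfolding disc_value_def sa_dist_Suc_shift[symmetric]
  using expectation_bind_step_sa[OF assms(1) set_pmf_sa_dist[OF assms]] by simp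

lemma disc_value_bind:
  assumes "is_policy pol" "set_pmf \<mu> \<subseteq> S \<times> A"
  shows "disc_value pol \<mu> g = measure_pmf.expectation \<mu> (\<lambda>y. disc_value pol (return_pmf y) g)"
proof -
  let ?e = "\<lambda>y t. \<gamma> ^ t * measure_pmf.expectation (sa_dist P pol (return_pmf y) t) g"
  have summable: "summable (?e y)" if "y \<in> S \<times> A" for y
    using that by (intro summable_disc_value assms) auto
  have supp: "set_pmf (sa_dist P pol (return_pmf y) t) \<subseteq> S \<times> A" if "y \<in> S \<times> A" for y t
    using that by (intro set_pmf_sa_dist assms) auto
  have "measure_pmf.expectation (sa_dist P pol \<mu> t) g
      = (\<Sum>y\<in>S \<times> A. pmf \<mu> y * measure_pmf.expectation (sa_dist P pol (return_pmf y) t) g)" for t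
    by (subst sa_dist_bind_return)
       (rule expectation_bind_finite_support[OF finite_SA assms(2) finite_SA supp])
  then have "disc_value pol \<mu> g = (\<Sum>t. \<Sum>y\<in>S \<times> A. pmf \<mu> y * ?e y t)"
    unfolding disc_value_def by (simp add: sum_distrib_left algebra_simps)
  also have "\<dots> = (\<Sum>y\<in>S \<times> A. \<Sum>t. pmf \<mu> y * ?e y t)"
    using summable by (intro suminf_sum summable_mult) auto
  also have "\<dots> = (\<Sum>y\<in>S \<times> A. pmf \<mu> y * disc_value pol (return_pmf y) g)"
    unfolding disc_value_def using summable by (intro sum.cong refl suminf_mult) auto
  finally show ?thesis using assms finite_SA by (simp add: expectation_finite_support[of "S \<times> A"])
qed

lemma disc_value_init_eq_occ:
  assumes "is_policy pol" "set_pmf d0 \<subseteq> S"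
  shows "disc_value pol (init_sa d0 pol) g = (\<Sum>x\<in>S \<times> A. occ P \<gamma> d0 pol x * g x) / (1 - \<gamma>)"
proof -
  let ?\<mu> = "sa_dist P pol (init_sa d0 pol)"
  have supp: "set_pmf (?\<mu> t) \<subseteq> S \<times> A" for t
    by (intro set_pmf_sa_dist set_pmf_init_sa assms)
  have summable: "summable (\<lambda>t. \<gamma> ^ t * pmf (?\<mu> t) x)" for x
    using discount_nonneg discount_less_1 by (rule summable_discounted[where M=1]) (simp add: pmf_le_1)
  have "disc_value pol (init_sa d0 pol) g = (\<Sum>t. \<Sum>x\<in>S \<times> A. g x * (\<gamma> ^ t * pmf (?\<mu> t) x))"
    unfolding disc_value_def expectation_finite_support[OF finite_SA supp]
    by (simp add: sum_distrib_left algebra_simps)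
  also have "\<dots> = (\<Sum>x\<in>S \<times> A. g x * (\<Sum>t. \<gamma> ^ t * pmf (?\<mu> t) x))"
    using summable by (simp add: suminf_sum summable_mult suminf_mult)
  finally show ?thesis
    unfolding occ_def using discount_less_1 by (simp add: sum_divide_distrib mult.commute)
qed

lemma occ_nonneg: "0 \<le> occ P \<gamma> d0 pol x"
proof -
  have "summable (\<lambda>t. \<gamma> ^ t * pmf (sa_dist P pol (init_sa d0 pol) t) x)"
    using discount_nonneg discount_less_1 by (rule summable_discounted[where M=1]) (simp add: pmf_le_1)
  then have "0 \<le> (\<Sum>t. \<gamma> ^ t * pmf (sa_dist P pol (init_sa d0 pol) t) x)"
    by (intro suminf_nonneg mult_nonneg_nonneg zero_le_power discount_nonneg pmf_nonneg)
  then show ?thesis unfolding occ_def using discount_less_1 by simp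
qed

lemma sum_occ_eq_1:
  assumes "is_policy pol" "set_pmf d0 \<subseteq> S"
  shows "(\<Sum>x\<in>S \<times> A. occ P \<gamma> d0 pol x) = 1"
proof -
  have "disc_value pol (init_sa d0 pol) (\<lambda>_. 1) = (\<Sum>t. \<gamma> ^ t)"
    unfolding disc_value_def by simp
  also have "\<dots> = 1 / (1 - \<gamma>)"
    using discount_nonneg discount_less_1 by (simp add: suminf_geometric)
  finally show ?thesis
    using disc_value_init_eq_occ[OF assms, of "\<lambda>_. 1"] discount_less_1 by (simp add: field_simps)
qed

lemma occ_le_conc:
  assumes "conc S A P \<gamma> d0 dD pol < \<infinity>" "set_pmf dD \<subseteq> S \<times> A"
  shows "0 \<le> real_of_ereal (conc S A P \<gamma> d0 dD pol)"
    and "\<And>x. x \<in> S \<times> A \<Longrightarrow> occ P \<gamma> d0 pol x \<le> real_of_ereal (conc S A P \<gamma> d0 dD pol) * pmf dD x"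
proof -
  define ratio where "ratio = (\<lambda>x. if pmf dD x = 0 then (if occ P \<gamma> d0 pol x = 0 then 0 else \<infinity>)
                 else ereal (occ P \<gamma> d0 pol x / pmf dD x))"
  have ratio_le: "ratio x \<le> conc S A P \<gamma> d0 dD pol" if "x \<in> S \<times> A" for x
    unfolding conc_def ratio_def[symmetric] using finite_SA that by (intro Max_ge) auto
  have ratio_nonneg: "0 \<le> ratio x" for x
    unfolding ratio_def using occ_nonneg[of d0 pol x] by auto
  obtain x0 where "x0 \<in> set_pmf dD" using set_pmf_not_empty[of dD] by blast
  then have "x0 \<in> S \<times> A" using assms(2) by blast
  then have "0 \<le> conc S A P \<gamma> d0 dD pol" using ratio_nonneg ratio_le order.trans by blast
  then obtain C where C: "conc S A P \<gamma> d0 dD pol = ereal C" "0 \<le> C"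
    using assms(1) by (cases "conc S A P \<gamma> d0 dD pol") auto
  then show "0 \<le> real_of_ereal (conc S A P \<gamma> d0 dD pol)" by simp
  fix x assume x: "x \<in> S \<times> A"
  show "occ P \<gamma> d0 pol x \<le> real_of_ereal (conc S A P \<gamma> d0 dD pol) * pmf dD x"
  proof (cases "pmf dD x = 0")
    case True
    then show ?thesis using ratio_le[OF x] C unfolding ratio_def by (auto split: if_splits)
  next
    case False
    then have "occ P \<gamma> d0 pol x / pmf dD x \<le> C" using ratio_le[OF x] C unfolding ratio_def by simp
    moreover have "0 < pmf dD x" using False pmf_nonneg[of dD x] by linarith
    ultimately show ?thesis using C by (simp add: divide_le_eq mult.commute)
  qed
qed

lemma Qfun_fixed_point:
  assumes "is_policy pol" "s \<in> S" "a \<in> A"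
  shows "Qfun P R \<gamma> pol s a = bellman A P R \<gamma> pol (Qfun P R \<gamma> pol) s a"
proof -
  have sa: "set_pmf (return_pmf (s, a)) \<subseteq> S \<times> A" using assms by simp
  have step: "set_pmf (step_sa P pol (s, a)) \<subseteq> S \<times> A" using set_pmf_step_sa assms by simp
  have "Qfun P R \<gamma> pol s a
      = R s a + \<gamma> * disc_value pol (step_sa P pol (s, a)) (\<lambda>(s, a). R s a)"
    unfolding Qfun_eq_disc_value disc_value_unfold[OF assms(1) sa] by (simp add: bind_return_pmf)
  also have "disc_value pol (step_sa P pol (s, a)) (\<lambda>(s, a). R s a)
      = measure_pmf.expectation (step_sa P pol (s, a)) (\<lambda>(s, a). Qfun P R \<gamma> pol s a)"
    unfolding disc_value_bind[OF assms(1) step] Qfun_eq_disc_value by (simp add: case_prod_unfold)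
  also have "\<dots> = measure_pmf.expectation (P s a) (fpol A (Qfun P R \<gamma> pol) pol)"
    by (rule expectation_step_sa[OF assms])
  finally show ?thesis unfolding bellman_def .
qed

lemma Jret_eq_Jf_Qfun:
  assumes "is_policy pol" "set_pmf d0 \<subseteq> S"
  shows "Jret P R \<gamma> d0 pol = Jf A d0 (Qfun P R \<gamma> pol) pol"
  unfolding Jret_eq_disc_value disc_value_bind[OF assms(1) set_pmf_init_sa[OF assms]]
    expectation_init_sa[OF assms, symmetric] Qfun_eq_disc_value
  by (simp add: case_prod_unfold)

lemma fpol_bounds:
  assumes "is_policy pol" "s \<in> S" "\<forall>a\<in>A. 0 \<le> f s a \<and> f s a \<le> V"
  shows "0 \<le> fpol A f pol s" and "fpol A f pol s \<le> V"
proof -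
  have "set_pmf (pol s) \<subseteq> A" using assms(1,2) unfolding is_policy_def by auto
  have "fpol A f pol s \<le> (\<Sum>a\<in>A. pmf (pol s) a * V)"
    unfolding fpol_def using assms(3) by (intro sum_mono mult_left_mono) auto
  also have "\<dots> = V" using sum_pmf_eq_1[OF finite_A \<open>set_pmf (pol s) \<subseteq> A\<close>] by (simp flip: sum_distrib_right)
  finally show "fpol A f pol s \<le> V" .
  show "0 \<le> fpol A f pol s" unfolding fpol_def using assms(3) by (auto intro!: sum_nonneg)
qed

lemma Jf_cong:
  assumes "set_pmf d0 \<subseteq> S" "\<forall>s\<in>S. \<forall>a\<in>A. f s a = g s a"
  shows "Jf A d0 f pol = Jf A d0 g pol"
  unfolding Jf_def using assms by (intro expectation_cong_support fpol_cong) auto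

lemma Jret_eq_0:
  assumes "is_policy pol" "set_pmf d0 \<subseteq> S" "\<forall>s\<in>S. \<forall>a\<in>A. R s a = 0"
  shows "Jret P R \<gamma> d0 pol = 0"
  unfolding Jret_eq_disc_value disc_value_init_eq_occ[OF assms(1,2)]
  using assms(3) by (auto intro!: sum.neutral)

lemma Jret_minus_Jf_eq_occ:
  assumes "is_policy pol" "set_pmf d0 \<subseteq> S"
  shows "Jret P R \<gamma> d0 pol - Jf A d0 f pol
       = (\<Sum>x\<in>S \<times> A. occ P \<gamma> d0 pol x
            * (bellman A P R \<gamma> pol f (fst x) (snd x) - f (fst x) (snd x))) / (1 - \<gamma>)"
proof -
  let ?\<mu> = "init_sa d0 pol"
  let ?occ = "\<lambda>g. \<Sum>x\<in>S \<times> A. occ P \<gamma> d0 pol x * g x"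
  let ?f = "\<lambda>(s, a). f s a" and ?R = "\<lambda>(s, a). R s a"
  let ?G = "\<lambda>(s, a). measure_pmf.expectation (P s a) (fpol A f pol)"
  have \<mu>: "set_pmf ?\<mu> \<subseteq> S \<times> A" by (rule set_pmf_init_sa[OF assms])
  have "disc_value pol ?\<mu> ?f
      = measure_pmf.expectation ?\<mu> ?f + \<gamma> * disc_value pol (bind_pmf ?\<mu> (step_sa P pol)) ?f"
    by (rule disc_value_unfold[OF assms(1) \<mu>])
  also have "\<dots> = Jf A d0 f pol + \<gamma> * disc_value pol ?\<mu> ?G"
    unfolding expectation_init_sa[OF assms] disc_value_step_sa[OF assms(1) \<mu>] ..
  finally have "Jf A d0 f pol = (?occ ?f - \<gamma> * ?occ ?G) / (1 - \<gamma>)"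
    unfolding disc_value_init_eq_occ[OF assms] using discount_less_1 by (simp add: field_simps)
  moreover have "Jret P R \<gamma> d0 pol = ?occ ?R / (1 - \<gamma>)"
    unfolding Jret_eq_disc_value disc_value_init_eq_occ[OF assms] ..
  moreover have "(\<Sum>x\<in>S \<times> A. occ P \<gamma> d0 pol x
        * (bellman A P R \<gamma> pol f (fst x) (snd x) - f (fst x) (snd x))) = ?occ ?R + \<gamma> * ?occ ?G - ?occ ?f"
    unfolding bellman_def case_prod_unfold
    by (simp add: algebra_simps sum.distrib sum_subtractf sum_distrib_left)
  ultimately show ?thesis using discount_less_1 by (simp add: field_simps)
qed

lemma Jret_minus_Jf_le:
  assumes pol: "is_policy pol" and d0: "set_pmf d0 \<subseteq> S" and dD: "set_pmf dD \<subseteq> S \<times> A"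
    and conc: "conc S A P \<gamma> d0 dD pol < \<infinity>"
    and h: "\<forall>s\<in>S. \<forall>a\<in>A. h s a = bellman A P R \<gamma> pol f s a"
    and dist: "sq_dist dD h f \<le> \<beta>"
  shows "Jret P R \<gamma> d0 pol - Jf A d0 f pol
       \<le> sqrt (real_of_ereal (conc S A P \<gamma> d0 dD pol) * \<beta>) / (1 - \<gamma>)"
proof -
  let ?d = "\<lambda>x. bellman A P R \<gamma> pol f (fst x) (snd x) - f (fst x) (snd x)"
  have "(\<Sum>x\<in>S \<times> A. pmf dD x * (?d x)\<^sup>2) = sq_dist dD h f"
    unfolding sq_dist_def expectation_finite_support[OF finite_SA dD]
    using h by (intro sum.cong refl) (auto simp: case_prod_unfold)
  then have "(\<Sum>x\<in>S \<times> A. occ P \<gamma> d0 pol x * ?d x) \<le> sqrt (real_of_ereal (conc S A P \<gamma> d0 dD pol) * \<beta>)"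
    using dist
    by (intro sum_le_sqrt_by_change_of_measure[where u = "pmf dD"] occ_nonneg sum_occ_eq_1[OF pol d0]
        occ_le_conc[OF conc dD]) auto
  then show ?thesis
    unfolding Jret_minus_Jf_eq_occ[OF pol d0] using discount_less_1 by (simp add: divide_right_mono)
qed

definition excess_loss :: "(nat \<Rightarrow> real) \<Rightarrow> (nat \<Rightarrow> nat \<Rightarrow> real) \<Rightarrow> (nat \<Rightarrow> nat \<Rightarrow> real) \<Rightarrow> sample \<Rightarrow> real"
  where "excess_loss v g h = (\<lambda>(s, a, r, s'). (g s a - r - \<gamma> * v s')\<^sup>2 - (h s a - r - \<gamma> * v s')\<^sup>2)"

lemma Lhat_diff_eq_excess_loss:
  "Lhat A \<gamma> n Ds g f pol - Lhat A \<gamma> n Ds h f pol = (\<Sum>i<n. excess_loss (fpol A f pol) g h (Ds i)) / real n"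
  unfolding Lhat_def excess_loss_def by (simp add: sum_subtractf diff_divide_distrib case_prod_unfold)

lemma excess_loss_eq:
  "excess_loss v g h (s, a, r, s') = (g s a - h s a) * (g s a + h s a - 2 * (r + \<gamma> * v s'))"
  unfolding excess_loss_def by (simp add: power2_eq_square algebra_simps)

lemma set_pmf_Dsample:
  assumes "set_pmf dD \<subseteq> S \<times> A" "z \<in> set_pmf (Dsample P R dD)"
  obtains s a s' where "z = (s, a, R s a, s')" "s \<in> S" "a \<in> A" "s' \<in> S"
  using assms set_pmf_P unfolding Dsample_def by (fastforce simp: set_bind_pmf)

lemma finite_set_pmf_Dsample:
  assumes "set_pmf dD \<subseteq> S \<times> A"
  shows "finite (set_pmf (Dsample P R dD))"
proof (rule finite_subset)
  show "set_pmf (Dsample P R dD) \<subseteq> (\<lambda>(s, a, s'). (s, a, R s a, s')) ` (S \<times> A \<times> S)"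
    by (force elim: set_pmf_Dsample[OF assms])
  show "finite ((\<lambda>(s, a, s'). (s, a, R s a, s')) ` (S \<times> A \<times> S))"
    using finite_S finite_A by simp
qed

lemma expectation_Dsample:
  fixes \<Phi> :: "sample \<Rightarrow> real"
  assumes "set_pmf dD \<subseteq> S \<times> A"
  shows "measure_pmf.expectation (Dsample P R dD) \<Phi>
       = measure_pmf.expectation dD (\<lambda>(s, a). measure_pmf.expectation (P s a) (\<lambda>s'. \<Phi> (s, a, R s a, s')))"
proof -
  have "measure_pmf.expectation (Dsample P R dD) \<Phi>
      = (\<Sum>x\<in>S \<times> A. pmf dD x * measure_pmf.expectation
           ((\<lambda>(s, a). map_pmf (\<lambda>s'. (s, a, R s a, s')) (P s a)) x) \<Phi>)"
    unfolding Dsample_def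
  proof (rule expectation_bind_finite_support[OF finite_SA assms])
    show "finite ((\<lambda>(s, a, s'). (s, a, R s a, s')) ` (S \<times> A \<times> S))"
      using finite_S finite_A by simp
    show "set_pmf ((\<lambda>(s, a). map_pmf (\<lambda>s'. (s, a, R s a, s')) (P s a)) x)
        \<subseteq> (\<lambda>(s, a, s'). (s, a, R s a, s')) ` (S \<times> A \<times> S)" if "x \<in> S \<times> A" for x
      using that set_pmf_P by (cases x) force
  qed
  then show ?thesis
    using assms finite_SA by (simp add: expectation_finite_support[of "S \<times> A"] case_prod_unfold)
qed

context
  fixes dD :: "(nat \<times> nat) pmf" and V :: real and v :: "nat \<Rightarrow> real" and g h :: "nat \<Rightarrow> nat \<Rightarrow> real"
  assumes dD: "set_pmf dD \<subseteq> S \<times> A"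
    and R_bound: "\<forall>s\<in>S. \<forall>a\<in>A. 0 \<le> R s a \<and> R s a \<le> (1 - \<gamma>) * V"
    and g_bound: "\<forall>s\<in>S. \<forall>a\<in>A. 0 \<le> g s a \<and> g s a \<le> V"
    and h_bound: "\<forall>s\<in>S. \<forall>a\<in>A. 0 \<le> h s a \<and> h s a \<le> V"
    and v_bound: "\<forall>s\<in>S. 0 \<le> v s \<and> v s \<le> V"
    and h_backup: "\<forall>s\<in>S. \<forall>a\<in>A. h s a = R s a + \<gamma> * measure_pmf.expectation (P s a) v"
begin

lemma abs_excess_loss_factors_le:
  assumes "s \<in> S" "a \<in> A" "s' \<in> S"
  shows "\<bar>g s a - h s a\<bar> \<le> V" and "\<bar>g s a + h s a - 2 * (R s a + \<gamma> * v s')\<bar> \<le> 2 * V"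
proof -
  show "\<bar>g s a - h s a\<bar> \<le> V" using g_bound h_bound assms by fastforce
  have "0 \<le> \<gamma> * v s'" "\<gamma> * v s' \<le> \<gamma> * V"
    using v_bound assms discount_nonneg by (auto intro: mult_left_mono)
  then show "\<bar>g s a + h s a - 2 * (R s a + \<gamma> * v s')\<bar> \<le> 2 * V"
    using g_bound h_bound R_bound assms by (fastforce simp: algebra_simps)
qed

lemma abs_excess_loss_le:
  assumes "z \<in> set_pmf (Dsample P R dD)"
  shows "\<bar>excess_loss v g h z\<bar> \<le> 2 * V\<^sup>2"
proof -
  obtain s a s' where z: "z = (s, a, R s a, s')" "s \<in> S" "a \<in> A" "s' \<in> S"
    using set_pmf_Dsample[OF dD assms] .
  have "\<bar>excess_loss v g h z\<bar> \<le> V * (2 * V)"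
    unfolding z(1) excess_loss_eq abs_mult using abs_excess_loss_factors_le[OF z(2-4)] by (intro mult_mono) auto
  then show ?thesis by (simp add: power2_eq_square)
qed

lemma expectation_excess_loss:
  "measure_pmf.expectation (Dsample P R dD) (excess_loss v g h) = sq_dist dD g h"
proof -
  have "measure_pmf.expectation (P s a) (\<lambda>s'. excess_loss v g h (s, a, R s a, s')) = (g s a - h s a)\<^sup>2"
    if "s \<in> S" "a \<in> A" for s a
  proof -
    let ?c = "g s a - h s a"
    have "measure_pmf.expectation (P s a) (\<lambda>s'. excess_loss v g h (s, a, R s a, s'))
        = (\<Sum>s'\<in>S. pmf (P s a) s' * (?c * (g s a + h s a - 2 * R s a) - 2 * \<gamma> * ?c * v s'))"
      unfolding excess_loss_eq expectation_finite_support[OF finite_S set_pmf_P[OF that]]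
      by (intro sum.cong refl) (simp add: algebra_simps)
    also have "\<dots> = ?c * (g s a + h s a - 2 * R s a) * (\<Sum>s'\<in>S. pmf (P s a) s')
                    - 2 * \<gamma> * ?c * (\<Sum>s'\<in>S. pmf (P s a) s' * v s')"
      by (simp add: sum_subtractf sum_distrib_left sum_distrib_right right_diff_distrib mult_ac)
    also have "\<dots> = ?c * (g s a + h s a - 2 * R s a) - 2 * \<gamma> * ?c * measure_pmf.expectation (P s a) v"
      using sum_pmf_eq_1[OF finite_S set_pmf_P[OF that]]
      by (simp add: expectation_finite_support[OF finite_S set_pmf_P[OF that]])
    also have "\<dots> = ?c\<^sup>2" using h_backup that by (simp add: power2_eq_square algebra_simps)
    finally show ?thesis .
  qed
  then show ?thesis
    unfolding expectation_Dsample[OF dD] sq_dist_def using dD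
    by (intro expectation_cong_support) auto
qed

lemma expectation_excess_loss_sq_le:
  "measure_pmf.expectation (Dsample P R dD) (\<lambda>z. (excess_loss v g h z)\<^sup>2) \<le> 4 * V\<^sup>2 * sq_dist dD g h"
proof -
  have inner: "measure_pmf.expectation (P s a) (\<lambda>s'. (excess_loss v g h (s, a, R s a, s'))\<^sup>2)
      \<le> measure_pmf.expectation (P s a) (\<lambda>_. 4 * V\<^sup>2 * (g s a - h s a)\<^sup>2)"
    if "s \<in> S" "a \<in> A" for s a
  proof (rule expectation_mono_support)
    show "finite (set_pmf (P s a))" using finite_S set_pmf_P[OF that] by (rule finite_subset[rotated])
    fix s' assume "s' \<in> set_pmf (P s a)"
    then have "\<bar>g s a + h s a - 2 * (R s a + \<gamma> * v s')\<bar>\<^sup>2 \<le> (2 * V)\<^sup>2"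
      using abs_excess_loss_factors_le(2)[OF that] set_pmf_P[OF that] by (intro power_mono) auto
    from mult_left_mono[OF this zero_le_power2[of "g s a - h s a"]]
    show "(excess_loss v g h (s, a, R s a, s'))\<^sup>2 \<le> 4 * V\<^sup>2 * (g s a - h s a)\<^sup>2"
      unfolding excess_loss_eq by (simp add: power_mult_distrib mult_ac)
  qed
  have "measure_pmf.expectation (Dsample P R dD) (\<lambda>z. (excess_loss v g h z)\<^sup>2)
      \<le> measure_pmf.expectation dD (\<lambda>(s, a). 4 * V\<^sup>2 * (g s a - h s a)\<^sup>2)"
    unfolding expectation_Dsample[OF dD]
  proof (rule expectation_mono_support)
    show "finite (set_pmf dD)" using finite_SA dD by (rule finite_subset[rotated])
  qed (use inner dD in force)
  then show ?thesis unfolding sq_dist_def by (simp add: case_prod_unfold)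
qed

lemma prob_excess_loss_deviation_le:
  assumes "0 < V" "0 < \<delta>"
  shows "measure_pmf.prob (dataset_pmf n (Dsample P R dD))
     {Ds. (\<Sum>i<n. excess_loss v g h (Ds i)) < real n * sq_dist dD g h / 2 - 8 * V\<^sup>2 * ln (1 / \<delta>)}
     \<le> \<delta>"
proof -
  have "0 \<le> sq_dist dD g h" by (rule sq_dist_nonneg)
  moreover have "ln (1 / \<delta>) / (1 / (8 * V\<^sup>2)) = 8 * V\<^sup>2 * ln (1 / \<delta>)" by simp
  ultimately show ?thesis
    unfolding dataset_pmf_def
    using prob_sum_lt_half_mean_le[OF finite_set_pmf_Dsample[OF dD] abs_excess_loss_le
        expectation_excess_loss _ expectation_excess_loss_sq_le,
        where \<eta> = "1 / (8 * V\<^sup>2)" and \<delta> = \<delta> and n = n and dflt = undefined]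
      assms
    by (simp add: mult.commute)
qed

end

end

locale offline_rl = mdp +
  fixes Rmax :: real and d0 :: "nat pmf" and dD :: "(nat \<times> nat) pmf"
    and F :: "(nat \<Rightarrow> nat \<Rightarrow> real) set" and Pol :: "policy set" and pi_cp :: policy
  assumes R_bound: "\<forall>s\<in>S. \<forall>a\<in>A. 0 \<le> R s a \<and> R s a \<le> Rmax"
    and set_pmf_d0: "set_pmf d0 \<subseteq> S" and set_pmf_dD: "set_pmf dD \<subseteq> S \<times> A"
    and finite_F: "finite F"
    and F_bound: "\<forall>f\<in>F. \<forall>s\<in>S. \<forall>a\<in>A. 0 \<le> f s a \<and> f s a \<le> Rmax / (1 - \<gamma>)"
    and finite_Pol: "finite Pol" and Pol_policies: "\<forall>pol\<in>Pol. \<forall>s\<in>S. set_pmf (pol s) \<subseteq> A"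
    and pi_cp: "pi_cp \<in> Pol"
    and conc_finite: "conc S A P \<gamma> d0 dD pi_cp < \<infinity>"
    and bellman_complete: "\<forall>f\<in>F. \<exists>g\<in>F. \<forall>s\<in>S. \<forall>a\<in>A. g s a = bellman A P R \<gamma> pi_cp f s a"
    and Qfun_realizable: "\<forall>pol\<in>Pol. \<exists>g\<in>F. \<forall>s\<in>S. \<forall>a\<in>A. g s a = Qfun P R \<gamma> pol s a"
begin

abbreviation Vmax :: real where "Vmax \<equiv> Rmax / (1 - \<gamma>)"

lemma is_policy_Pol: "pol \<in> Pol \<Longrightarrow> is_policy pol"
  using Pol_policies unfolding is_policy_def by auto

lemma Vmax_nonneg: "0 \<le> Vmax"
proof -
  obtain x where "x \<in> set_pmf dD" using set_pmf_not_empty[of dD] by blast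
  then obtain s a where "s \<in> S" "a \<in> A" using set_pmf_dD by blast
  then have "0 \<le> R s a" "R s a \<le> Rmax" using R_bound by auto
  then have "0 \<le> Rmax" by linarith
  then show ?thesis using discount_less_1 by simp
qed

lemma Rmax_eq: "(1 - \<gamma>) * Vmax = Rmax"
  using discount_less_1 by simp

definition Qrep :: "policy \<Rightarrow> nat \<Rightarrow> nat \<Rightarrow> real" where
  "Qrep pol = (SOME q. q \<in> F \<and> (\<forall>s\<in>S. \<forall>a\<in>A. q s a = Qfun P R \<gamma> pol s a))"

definition Trep :: "(nat \<Rightarrow> nat \<Rightarrow> real) \<Rightarrow> nat \<Rightarrow> nat \<Rightarrow> real" where
  "Trep f = (SOME h. h \<in> F \<and> (\<forall>s\<in>S. \<forall>a\<in>A. h s a = bellman A P R \<gamma> pi_cp f s a))"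

lemma Qrep:
  assumes "pol \<in> Pol"
  shows "Qrep pol \<in> F" and "\<forall>s\<in>S. \<forall>a\<in>A. Qrep pol s a = Qfun P R \<gamma> pol s a"
  using someI_ex[OF Qfun_realizable[rule_format, OF assms, unfolded Bex_def]] unfolding Qrep_def by auto

lemma Trep:
  assumes "f \<in> F"
  shows "Trep f \<in> F" and "\<forall>s\<in>S. \<forall>a\<in>A. Trep f s a = bellman A P R \<gamma> pi_cp f s a"
  using someI_ex[OF bellman_complete[rule_format, OF assms, unfolded Bex_def]] unfolding Trep_def by auto

lemma F_nonempty: "F \<noteq> {}"
  using Qrep(1)[OF pi_cp] by blast

lemma card_F_pos: "0 < card F" and card_Pol_pos: "0 < card Pol"
  using F_nonempty finite_F pi_cp finite_Pol by (auto simp: card_gt_0_iff)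

lemma Qrep_backup:
  assumes "pol \<in> Pol"
  shows "\<forall>s\<in>S. \<forall>a\<in>A. Qrep pol s a = R s a + \<gamma> * measure_pmf.expectation (P s a) (fpol A (Qrep pol) pol)"
proof (intro ballI)
  fix s a assume sa: "s \<in> S" "a \<in> A"
  have "measure_pmf.expectation (P s a) (fpol A (Qfun P R \<gamma> pol) pol)
      = measure_pmf.expectation (P s a) (fpol A (Qrep pol) pol)"
    using Qrep(2)[OF assms] set_pmf_P[OF sa] by (intro expectation_cong_support fpol_cong) auto
  then show "Qrep pol s a = R s a + \<gamma> * measure_pmf.expectation (P s a) (fpol A (Qrep pol) pol)"
    using Qrep(2)[OF assms] Qfun_fixed_point[OF is_policy_Pol[OF assms] sa] sa
    unfolding bellman_def by simp
qed

lemma Trep_backup: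
  assumes "f \<in> F"
  shows "\<forall>s\<in>S. \<forall>a\<in>A. Trep f s a = R s a + \<gamma> * measure_pmf.expectation (P s a) (fpol A f pi_cp)"
  using Trep(2)[OF assms] unfolding bellman_def .

lemma JVS_le_Jret:
  assumes "pol \<in> Pol" "Ehat A \<gamma> n Ds F (Qrep pol) pol \<le> \<epsilon>"
  shows "JVS A \<gamma> d0 n Ds F \<epsilon> pol \<le> ereal (Jret P R \<gamma> d0 pol)"
proof -
  let ?V = "vspace A \<gamma> n Ds F \<epsilon> pol"
  have Q: "Qrep pol \<in> ?V" unfolding vspace_def using Qrep(1) assms by simp
  moreover have "finite ?V" unfolding vspace_def using finite_F by simp
  ultimately have "Min ((\<lambda>f. Jf A d0 f pol) ` ?V) \<le> Jf A d0 (Qrep pol) pol" by (intro Min_le) auto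
  also have "\<dots> = Jret P R \<gamma> d0 pol"
    using Jf_cong[OF set_pmf_d0 Qrep(2)[OF assms(1)]] Jret_eq_Jf_Qfun[OF is_policy_Pol set_pmf_d0] assms(1)
    by simp
  finally show ?thesis unfolding JVS_def Let_def using Q by auto
qed

lemma Jret_le_JVS:
  assumes "Ehat A \<gamma> n Ds F (Qrep pi_cp) pi_cp \<le> \<epsilon>"
    and small_residual: "\<forall>f\<in>F. Ehat A \<gamma> n Ds F f pi_cp \<le> \<epsilon> \<longrightarrow> sq_dist dD f (Trep f) \<le> \<beta>"
  shows "ereal (Jret P R \<gamma> d0 pi_cp - sqrt (real_of_ereal (conc S A P \<gamma> d0 dD pi_cp) * \<beta>) / (1 - \<gamma>))
       \<le> JVS A \<gamma> d0 n Ds F \<epsilon> pi_cp"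
proof -
  let ?V = "vspace A \<gamma> n Ds F \<epsilon> pi_cp"
  have "Qrep pi_cp \<in> ?V" unfolding vspace_def using Qrep(1)[OF pi_cp] assms(1) by simp
  moreover have "finite ?V" unfolding vspace_def using finite_F by simp
  ultimately have "Min ((\<lambda>f. Jf A d0 f pi_cp) ` ?V) \<in> (\<lambda>f. Jf A d0 f pi_cp) ` ?V"
    and V_ne: "?V \<noteq> {}" by (auto intro!: Min_in)
  then obtain f where f: "f \<in> F" "Ehat A \<gamma> n Ds F f pi_cp \<le> \<epsilon>"
    and f_min: "Jf A d0 f pi_cp = Min ((\<lambda>f. Jf A d0 f pi_cp) ` ?V)"
    unfolding vspace_def by auto
  have "Jret P R \<gamma> d0 pi_cp - Jf A d0 f pi_cp
      \<le> sqrt (real_of_ereal (conc S A P \<gamma> d0 dD pi_cp) * \<beta>) / (1 - \<gamma>)"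
    using small_residual f Trep(2)[OF f(1)]
    by (intro Jret_minus_Jf_le[OF is_policy_Pol[OF pi_cp] set_pmf_d0 set_pmf_dD conc_finite])
       (auto simp: sq_dist_commute)
  then show ?thesis unfolding JVS_def Let_def using V_ne f_min by simp
qed

definition good_dataset :: "nat \<Rightarrow> real \<Rightarrow> real \<Rightarrow> (nat \<Rightarrow> sample) \<Rightarrow> bool" where
  "good_dataset n \<epsilon> \<beta> Ds \<longleftrightarrow>
     (\<forall>pol\<in>Pol. Ehat A \<gamma> n Ds F (Qrep pol) pol \<le> \<epsilon>) \<and>
     (\<forall>f\<in>F. Ehat A \<gamma> n Ds F f pi_cp \<le> \<epsilon> \<longrightarrow> sq_dist dD f (Trep f) \<le> \<beta>)"

lemma suboptimality_le_of_good_dataset: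
  assumes "good_dataset n \<epsilon> \<beta> Ds" "pi_hat \<in> Pol"
    and "\<forall>pol\<in>Pol. JVS A \<gamma> d0 n Ds F \<epsilon> pol \<le> JVS A \<gamma> d0 n Ds F \<epsilon> pi_hat"
  shows "Jret P R \<gamma> d0 pi_cp - Jret P R \<gamma> d0 pi_hat
       \<le> sqrt (real_of_ereal (conc S A P \<gamma> d0 dD pi_cp) * \<beta>) / (1 - \<gamma>)"
proof -
  have "ereal (Jret P R \<gamma> d0 pi_cp - sqrt (real_of_ereal (conc S A P \<gamma> d0 dD pi_cp) * \<beta>) / (1 - \<gamma>))
      \<le> JVS A \<gamma> d0 n Ds F \<epsilon> pi_cp"
    using assms(1) pi_cp unfolding good_dataset_def by (intro Jret_le_JVS) auto
  also have "\<dots> \<le> JVS A \<gamma> d0 n Ds F \<epsilon> pi_hat" using assms(3) pi_cp by blast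
  also have "\<dots> \<le> ereal (Jret P R \<gamma> d0 pi_hat)"
    using assms(1,2) unfolding good_dataset_def by (intro JVS_le_Jret) auto
  finally show ?thesis by simp
qed

definition deviation :: "nat \<Rightarrow> real \<Rightarrow> (nat \<Rightarrow> real) \<Rightarrow> (nat \<Rightarrow> nat \<Rightarrow> real) \<Rightarrow> (nat \<Rightarrow> nat \<Rightarrow> real)
    \<Rightarrow> (nat \<Rightarrow> sample) set" where
  "deviation n l v g h =
     {Ds. (\<Sum>i<n. excess_loss v g h (Ds i)) < real n * sq_dist dD g h / 2 - 8 * Vmax\<^sup>2 * l}"

lemma prob_deviation_le:
  assumes "0 < Vmax" "0 < \<delta>" "pol \<in> Pol" "f \<in> F" "g \<in> F" "h \<in> F"
    and "\<forall>s\<in>S. \<forall>a\<in>A. h s a = R s a + \<gamma> * measure_pmf.expectation (P s a) (fpol A f pol)"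
  shows "measure_pmf.prob (dataset_pmf n (Dsample P R dD)) (deviation n (ln (1 / \<delta>)) (fpol A f pol) g h) \<le> \<delta>"
  unfolding deviation_def
proof (rule prob_excess_loss_deviation_le[OF set_pmf_dD _ _ _ _ assms(7) assms(1,2)])
  show "\<forall>s\<in>S. \<forall>a\<in>A. 0 \<le> R s a \<and> R s a \<le> (1 - \<gamma>) * Vmax"
    using R_bound unfolding Rmax_eq .
  show "\<forall>s\<in>S. \<forall>a\<in>A. 0 \<le> g s a \<and> g s a \<le> Vmax" "\<forall>s\<in>S. \<forall>a\<in>A. 0 \<le> h s a \<and> h s a \<le> Vmax"
    using F_bound assms(5,6) by blast+
  show "\<forall>s\<in>S. 0 \<le> fpol A f pol s \<and> fpol A f pol s \<le> Vmax"
    using fpol_bounds[OF is_policy_Pol[OF assms(3)]] F_bound assms(4) by blast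
qed

lemma Ehat_Qrep_le:
  assumes "pol \<in> Pol" "0 < n" "8 * Vmax\<^sup>2 * l \<le> real n * \<epsilon>"
    and no_dev: "\<forall>g\<in>F. Ds \<notin> deviation n l (fpol A (Qrep pol) pol) g (Qrep pol)"
  shows "Ehat A \<gamma> n Ds F (Qrep pol) pol \<le> \<epsilon>"
proof (rule Ehat_le[OF finite_F F_nonempty])
  fix g assume "g \<in> F"
  let ?q = "Qrep pol"
  let ?\<Sigma> = "\<Sum>i<n. excess_loss (fpol A ?q pol) g ?q (Ds i)"
  have "real n * sq_dist dD g ?q / 2 - 8 * Vmax\<^sup>2 * l \<le> ?\<Sigma>"
    using no_dev \<open>g \<in> F\<close> unfolding deviation_def by (auto simp: not_less)
  moreover have "0 \<le> real n * sq_dist dD g ?q / 2" by (simp add: sq_dist_nonneg)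
  ultimately have "- (real n * \<epsilon>) \<le> ?\<Sigma>" using assms(3) by linarith
  then have "- \<epsilon> \<le> ?\<Sigma> / real n" using assms(2) by (simp add: pos_le_divide_eq mult.commute)
  moreover have "Lhat A \<gamma> n Ds g ?q pol - Lhat A \<gamma> n Ds ?q ?q pol = ?\<Sigma> / real n"
    by (rule Lhat_diff_eq_excess_loss)
  ultimately show "Lhat A \<gamma> n Ds ?q ?q pol - Lhat A \<gamma> n Ds g ?q pol \<le> \<epsilon>" by linarith
qed

lemma sq_dist_Trep_le:
  assumes "f \<in> F" "0 < n" "8 * Vmax\<^sup>2 * l \<le> real n * \<epsilon>" "Ehat A \<gamma> n Ds F f pi_cp \<le> \<epsilon>"
    and no_dev: "Ds \<notin> deviation n l (fpol A f pi_cp) f (Trep f)"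
  shows "sq_dist dD f (Trep f) \<le> 4 * \<epsilon>"
proof -
  let ?\<Sigma> = "\<Sum>i<n. excess_loss (fpol A f pi_cp) f (Trep f) (Ds i)"
  have "?\<Sigma> / real n = Lhat A \<gamma> n Ds f f pi_cp - Lhat A \<gamma> n Ds (Trep f) f pi_cp"
    by (rule Lhat_diff_eq_excess_loss[symmetric])
  also have "\<dots> \<le> \<epsilon>"
    using Lhat_diff_le_Ehat[OF finite_F Trep(1)[OF assms(1)], of A \<gamma> n Ds f pi_cp] assms(4) by linarith
  finally have "?\<Sigma> \<le> real n * \<epsilon>" using assms(2) by (simp add: pos_divide_le_eq mult.commute)
  moreover have "real n * sq_dist dD f (Trep f) / 2 - 8 * Vmax\<^sup>2 * l \<le> ?\<Sigma>"
    using no_dev unfolding deviation_def by (simp add: not_less)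
  ultimately have "real n * sq_dist dD f (Trep f) \<le> real n * (4 * \<epsilon>)" using assms(3) by linarith
  then show ?thesis using assms(2) by (simp add: mult_left_le_imp_le)
qed

lemma good_dataset_of_no_deviation:
  assumes "0 < n" "8 * Vmax\<^sup>2 * l \<le> real n * \<epsilon>"
    and "\<forall>pol\<in>Pol. \<forall>g\<in>F. Ds \<notin> deviation n l (fpol A (Qrep pol) pol) g (Qrep pol)"
    and "\<forall>f\<in>F. Ds \<notin> deviation n l (fpol A f pi_cp) f (Trep f)"
  shows "good_dataset n \<epsilon> (4 * \<epsilon>) Ds"
  unfolding good_dataset_def
  using Ehat_Qrep_le[OF _ assms(1,2)] sq_dist_Trep_le[OF _ assms(1,2)] assms(3,4) by blast

lemma prob_deviations_le:
  assumes "0 < Vmax" "0 < \<delta>"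
  shows "measure_pmf.prob (dataset_pmf n (Dsample P R dD))
      ((\<Union>pol\<in>Pol. \<Union>g\<in>F. deviation n (ln (1 / \<delta>)) (fpol A (Qrep pol) pol) g (Qrep pol))
       \<union> (\<Union>f\<in>F. deviation n (ln (1 / \<delta>)) (fpol A f pi_cp) f (Trep f)))
    \<le> (real (card Pol) + 1) * real (card F) * \<delta>"
proof -
  let ?M = "measure_pmf.prob (dataset_pmf n (Dsample P R dD))"
  let ?devQ = "\<lambda>pol g. deviation n (ln (1 / \<delta>)) (fpol A (Qrep pol) pol) g (Qrep pol)"
  let ?devT = "\<lambda>f. deviation n (ln (1 / \<delta>)) (fpol A f pi_cp) f (Trep f)"
  have "?M (\<Union>pol\<in>Pol. \<Union>g\<in>F. ?devQ pol g) \<le> (\<Sum>pol\<in>Pol. ?M (\<Union>g\<in>F. ?devQ pol g))"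
    using finite_Pol by (intro measure_pmf.finite_measure_subadditive_finite) auto
  also have "\<dots> \<le> (\<Sum>pol\<in>Pol. \<Sum>g\<in>F. ?M (?devQ pol g))"
    using finite_F by (intro sum_mono measure_pmf.finite_measure_subadditive_finite) auto
  also have "\<dots> \<le> (\<Sum>pol\<in>Pol. \<Sum>g\<in>F. \<delta>)"
    using assms Qrep Qrep_backup by (intro sum_mono prob_deviation_le) auto
  finally have Q: "?M (\<Union>pol\<in>Pol. \<Union>g\<in>F. ?devQ pol g) \<le> real (card Pol) * real (card F) * \<delta>" by simp
  have "?M (\<Union>f\<in>F. ?devT f) \<le> (\<Sum>f\<in>F. ?M (?devT f))"
    using finite_F by (intro measure_pmf.finite_measure_subadditive_finite) auto
  also have "\<dots> \<le> (\<Sum>f\<in>F. \<delta>)"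
    using assms pi_cp Trep Trep_backup by (intro sum_mono prob_deviation_le) auto
  finally have T: "?M (\<Union>f\<in>F. ?devT f) \<le> real (card F) * \<delta>" by simp
  have "?M ((\<Union>pol\<in>Pol. \<Union>g\<in>F. ?devQ pol g) \<union> (\<Union>f\<in>F. ?devT f))
      \<le> ?M (\<Union>pol\<in>Pol. \<Union>g\<in>F. ?devQ pol g) + ?M (\<Union>f\<in>F. ?devT f)"
    by (rule measure_Un_le) auto
  then show ?thesis using Q T by (simp add: algebra_simps)
qed

(* 2 <= card F gives ln 2 <= L, which absorbs the factor 2 of the union bound; for card F = 1
   the good event is certain. *)
lemma prob_not_good_dataset_le:
  assumes "0 < n" "0 < \<delta>" "\<delta> < 1" "0 < Vmax" "2 \<le> card F"
  defines "L \<equiv> ln (real (card F) * real (card Pol) / \<delta>)"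
  shows "measure_pmf.prob (dataset_pmf n (Dsample P R dD))
           {Ds. \<not> good_dataset n (16 * Vmax\<^sup>2 * L / real n) (64 * Vmax\<^sup>2 * L / real n) Ds} \<le> \<delta>"
proof -
  let ?M = "measure_pmf.prob (dataset_pmf n (Dsample P R dD))"
  let ?\<epsilon> = "16 * Vmax\<^sup>2 * L / real n"
  define \<delta>' where "\<delta>' = \<delta> / (2 * real (card F) * real (card Pol))"
  have \<delta>'_pos: "0 < \<delta>'" unfolding \<delta>'_def using assms(2) card_F_pos card_Pol_pos by simp
  have "2 * 1 \<le> real (card F) * real (card Pol)" using assms(5) card_Pol_pos by (intro mult_mono) auto
  also have "\<dots> \<le> real (card F) * real (card Pol) / \<delta>"
    using assms(2,3) by (simp add: pos_le_divide_eq mult_left_le)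
  finally have "ln (2 * (real (card F) * real (card Pol) / \<delta>)) \<le> 2 * L"
    unfolding L_def by (intro ln_double_le) simp
  moreover have "1 / \<delta>' = 2 * (real (card F) * real (card Pol) / \<delta>)" unfolding \<delta>'_def by simp
  ultimately have "8 * Vmax\<^sup>2 * ln (1 / \<delta>') \<le> 8 * Vmax\<^sup>2 * (2 * L)" by (intro mult_left_mono) auto
  also have "\<dots> = real n * ?\<epsilon>" using assms(1) by simp
  finally have confidence_le: "8 * Vmax\<^sup>2 * ln (1 / \<delta>') \<le> real n * ?\<epsilon>" .
  let ?bad = "(\<Union>pol\<in>Pol. \<Union>g\<in>F. deviation n (ln (1 / \<delta>')) (fpol A (Qrep pol) pol) g (Qrep pol))
        \<union> (\<Union>f\<in>F. deviation n (ln (1 / \<delta>')) (fpol A f pi_cp) f (Trep f))"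
  have "{Ds. \<not> good_dataset n ?\<epsilon> (4 * ?\<epsilon>) Ds} \<subseteq> ?bad"
  proof
    fix Ds assume "Ds \<in> {Ds. \<not> good_dataset n ?\<epsilon> (4 * ?\<epsilon>) Ds}"
    then show "Ds \<in> ?bad" using good_dataset_of_no_deviation[OF assms(1) confidence_le, of Ds] by blast
  qed
  then have "?M {Ds. \<not> good_dataset n ?\<epsilon> (4 * ?\<epsilon>) Ds} \<le> ?M ?bad"
    by (rule measure_pmf.finite_measure_mono) simp
  also have "\<dots> \<le> (real (card Pol) + 1) * real (card F) * \<delta>'"
    by (rule prob_deviations_le[OF assms(4) \<delta>'_pos])
  also have "\<dots> \<le> (2 * real (card Pol)) * real (card F) * \<delta>'"
    using card_Pol_pos \<delta>'_pos by (intro mult_right_mono) auto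
  also have "\<dots> = \<delta>" unfolding \<delta>'_def using card_F_pos card_Pol_pos by simp
  finally show ?thesis by (simp add: ac_simps)
qed

lemma prob_good_dataset:
  assumes "0 < n" "0 < \<delta>" "\<delta> < 1" "0 < Vmax"
  defines "L \<equiv> ln (real (card F) * real (card Pol) / \<delta>)"
  shows "1 - \<delta> \<le> measure_pmf.prob (dataset_pmf n (Dsample P R dD))
                   {Ds. good_dataset n (16 * Vmax\<^sup>2 * L / real n) (64 * Vmax\<^sup>2 * L / real n) Ds}"
proof (cases "card F = 1")
  case True
  then obtain f0 where F: "F = {f0}" by (auto simp: card_1_singleton_iff)
  have "1 \<le> real (card Pol) / \<delta>" using card_Pol_pos assms(2,3) by (simp add: pos_le_divide_eq)
  then have "0 \<le> L" unfolding L_def using True by simp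
  have "Qrep pol = f0" if "pol \<in> Pol" for pol using Qrep(1)[OF that] F by simp
  moreover have "Trep f0 = f0" using Trep(1)[of f0] F by simp
  moreover have "Ehat A \<gamma> n Ds F f0 pol = 0" for Ds pol unfolding Ehat_def F by simp
  ultimately have "good_dataset n (16 * Vmax\<^sup>2 * L / real n) (64 * Vmax\<^sup>2 * L / real n) Ds" for Ds
    unfolding good_dataset_def using \<open>0 \<le> L\<close> F by (simp add: sq_dist_self)
  then show ?thesis using assms(2) by simp
next
  case False
  then have "2 \<le> card F" using card_F_pos by linarith
  let ?good = "{Ds. good_dataset n (16 * Vmax\<^sup>2 * L / real n) (64 * Vmax\<^sup>2 * L / real n) Ds}"
  have "measure_pmf.prob (dataset_pmf n (Dsample P R dD)) (UNIV - ?good)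
      = 1 - measure_pmf.prob (dataset_pmf n (Dsample P R dD)) ?good"
    using measure_pmf.prob_compl[of ?good] by simp
  moreover have "UNIV - ?good = {Ds. \<not> good_dataset n (16 * Vmax\<^sup>2 * L / real n) (64 * Vmax\<^sup>2 * L / real n) Ds}"
    by auto
  ultimately show ?thesis
    using prob_not_good_dataset_le[OF assms(1-4) \<open>2 \<le> card F\<close>] unfolding L_def by simp
qed

theorem suboptimality_bound:
  assumes "0 < n" "0 < \<delta>" "\<delta> < 1"
  defines "L \<equiv> ln (real (card F) * real (card Pol) / \<delta>)"
  shows "1 - \<delta> \<le> measure_pmf.prob (dataset_pmf n (Dsample P R dD))
     {Ds. \<forall>pi_hat\<in>Pol.
        (\<forall>pol\<in>Pol. JVS A \<gamma> d0 n Ds F (16 * Vmax\<^sup>2 * L / real n) pol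
                   \<le> JVS A \<gamma> d0 n Ds F (16 * Vmax\<^sup>2 * L / real n) pi_hat) \<longrightarrow>
        Jret P R \<gamma> d0 pi_cp - Jret P R \<gamma> d0 pi_hat
          \<le> 8 * Vmax / (1 - \<gamma>) * sqrt (real_of_ereal (conc S A P \<gamma> d0 dD pi_cp) * L / real n)}"
    (is "_ \<le> measure_pmf.prob ?D ?E")
proof (cases "Vmax = 0")
  case True
  then have "Rmax = 0" using discount_less_1 by simp
  then have "Jret P R \<gamma> d0 pol = 0" if "pol \<in> Pol" for pol
    using R_bound by (intro Jret_eq_0 is_policy_Pol[OF that] set_pmf_d0) force
  then have "?E = UNIV" using True pi_cp by auto
  then show ?thesis using assms(2) by simp
next
  case False
  then have "0 < Vmax" using Vmax_nonneg by linarith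
  let ?C = "real_of_ereal (conc S A P \<gamma> d0 dD pi_cp)"
  let ?\<epsilon> = "16 * Vmax\<^sup>2 * L / real n" and ?\<beta> = "64 * Vmax\<^sup>2 * L / real n"
  have eq: "?C * ?\<beta> = (8 * Vmax)\<^sup>2 * (?C * L / real n)"
    by (simp add: power2_eq_square)
  have "sqrt ((8 * Vmax)\<^sup>2) = 8 * Vmax" using \<open>0 < Vmax\<close> by (intro real_sqrt_unique) auto
  then have "sqrt (?C * ?\<beta>) = 8 * Vmax * sqrt (?C * L / real n)"
    unfolding eq real_sqrt_mult by simp
  then have bound_eq: "sqrt (?C * ?\<beta>) / (1 - \<gamma>) = 8 * Vmax / (1 - \<gamma>) * sqrt (?C * L / real n)"
    unfolding times_divide_eq_left by simp
  have "Jret P R \<gamma> d0 pi_cp - Jret P R \<gamma> d0 pi_hat \<le> 8 * Vmax / (1 - \<gamma>) * sqrt (?C * L / real n)"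
    if "good_dataset n ?\<epsilon> ?\<beta> Ds" "pi_hat \<in> Pol"
      "\<forall>pol\<in>Pol. JVS A \<gamma> d0 n Ds F ?\<epsilon> pol \<le> JVS A \<gamma> d0 n Ds F ?\<epsilon> pi_hat" for Ds pi_hat
    using suboptimality_le_of_good_dataset[OF that] unfolding bound_eq .
  then have "{Ds. good_dataset n ?\<epsilon> ?\<beta> Ds} \<subseteq> ?E" by blast
  then have "measure_pmf.prob ?D {Ds. good_dataset n ?\<epsilon> ?\<beta> Ds} \<le> measure_pmf.prob ?D ?E"
    by (rule measure_pmf.finite_measure_mono) simp
  then show ?thesis using prob_good_dataset[OF assms(1-3) \<open>0 < Vmax\<close>] unfolding L_def by linarith
qed

end

theorem theorem2:
  shows "\<exists>c0 > (0::real). \<exists>c > (0::real).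
    \<forall>(S::nat set) (A::nat set) (P::nat \<Rightarrow> nat \<Rightarrow> nat pmf) (R::nat \<Rightarrow> nat \<Rightarrow> real) (Rmax::real)
      (\<gamma>::real) (d0::nat pmf) (dD::(nat \<times> nat) pmf) (F::(nat \<Rightarrow> nat \<Rightarrow> real) set)
      (Pol::policy set) (pi_cp::policy) (n::nat) (\<delta>::real).
      finite S \<and> finite A \<and>
      (\<forall>s\<in>S. \<forall>a\<in>A. set_pmf (P s a) \<subseteq> S) \<and>
      (\<forall>s\<in>S. \<forall>a\<in>A. 0 \<le> R s a \<and> R s a \<le> Rmax) \<and>
      0 \<le> \<gamma> \<and> \<gamma> < 1 \<and>
      set_pmf d0 \<subseteq> S \<and> set_pmf dD \<subseteq> S \<times> A \<and>
      finite F \<and>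
      (\<forall>f\<in>F. \<forall>s\<in>S. \<forall>a\<in>A. 0 \<le> f s a \<and> f s a \<le> Rmax / (1 - \<gamma>)) \<and>
      finite Pol \<and> (\<forall>pol\<in>Pol. \<forall>s\<in>S. set_pmf (pol s) \<subseteq> A) \<and>
      pi_cp \<in> Pol \<and>
      conc S A P \<gamma> d0 dD pi_cp < \<infinity> \<and>
      (\<forall>f\<in>F. \<exists>g\<in>F. \<forall>s\<in>S. \<forall>a\<in>A. g s a = bellman A P R \<gamma> pi_cp f s a) \<and>
      (\<forall>pol\<in>Pol. \<exists>g\<in>F. \<forall>s\<in>S. \<forall>a\<in>A. g s a = Qfun P R \<gamma> pol s a) \<and>
      n > 0 \<and> 0 < \<delta> \<and> \<delta> < 1
    \<longrightarrow>
      (let Vmax = Rmax / (1 - \<gamma>);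
           L = ln (real (card F) * real (card Pol) / \<delta>);
           eps0 = c0 * Vmax\<^sup>2 * L / real n
       in measure_pmf.prob (dataset_pmf n (Dsample P R dD))
            {Ds. \<forall>pi_hat\<in>Pol.
                   (\<forall>pol\<in>Pol. JVS A \<gamma> d0 n Ds F eps0 pol \<le> JVS A \<gamma> d0 n Ds F eps0 pi_hat) \<longrightarrow>
                   Jret P R \<gamma> d0 pi_cp - Jret P R \<gamma> d0 pi_hat
                     \<le> c * Vmax / (1 - \<gamma>) *
                        sqrt (real_of_ereal (conc S A P \<gamma> d0 dD pi_cp) * L / real n)}
          \<ge> 1 - \<delta>)"
proof (rule exI[of _ "16::real"], intro conjI exI[of _ "8::real"] allI impI, goal_cases)
  case (3 S A P R Rmax \<gamma> d0 dD F Pol pi_cp n \<delta>)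
  then interpret offline_rl S A P R \<gamma> Rmax d0 dD F Pol pi_cp
    by unfold_locales auto
  from 3 have "0 < n" "0 < \<delta>" "\<delta> < 1" by simp_all
  then show ?case unfolding Let_def by (rule suboptimality_bound)
qed simp_all

end
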